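(* Let $n\ge1$ and $\lambda,\mu$ partitions with at most $n$ parts. (1) If $\mu\not\supset\lambda$ (i.e. $\mu_i<\lambda_i$ for some $i$), then $s^{\mathbb L}_\lambda(\bar b_{I-\mu}||\mathbf b_\pm)=0$. (2) $s^{\mathbb L}_\lambda(\bar b_{I-\lambda}||\mathbf b_\pm)=\prod_{(i,j)\in\lambda}\big(\bar b_{i-\lambda_i}+_Fb_{\lambda'_j-j+1}\big)$, where the product is over the boxes $(i,j)$ (row $i$, column $j$) of the Young diagram of $\lambda$ and $\lambda'$ is the conjugate partition.
   Context: $\mathbb L$ is the Lazard ring with universal formal group law $u+_Fv$ and formal inverse $\bar u$ ($u+_F\bar u=0$). Let $\mathbf b_\pm=(\ldots,b_{-1},b_0,b_1,b_2,\ldots)$ be a doubly infinite sequence of indeterminates and set $(t||\mathbf b_\pm)^k_n=\prod_{i=1}^k(t+_Fb_{n+1-i})$. For a partition $\lambda=(\lambda_1\ge\cdots\ge\lambda_n\ge0)$, $$s^{\mathbb L}_\lambda(x_1,\ldots,x_n||\mathbf b_\pm)=\sum_{w\in S_n}w\Big(\frac{\prod_{i=1}^n(x_i||\mathbf b_\pm)^{\lambda_i+n-i}_n}{\prod_{1\le i<j\le n}(x_i+_F\bar x_j)}\Big),$$ with $S_n$ permuting $x_1,\dots,x_n$. For a partition $\mu$, $\bar b_{I-\mu}$ denotes the specialization $x_i=\bar b_{i-\mu_i}$ for $i=1,\ldots,n$. *)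

theory Defs
  imports "HOL-Combinatorics.Permutations"
begin

text \<open>Abstract formal group law data: a set M (playing the role of the elements of
  positive order, on which F converges) inside a field, a binary operation fadd
  (u +_F v) and formal inverse finv (bar u), satisfying the group-law axioms on M.\<close>
definition fgl_on :: "'a::field set \<Rightarrow> ('a \<Rightarrow> 'a \<Rightarrow> 'a) \<Rightarrow> ('a \<Rightarrow> 'a) \<Rightarrow> bool" where
  "fgl_on M fadd finv \<longleftrightarrow>
     0 \<in> M \<and>
     (\<forall>u\<in>M. \<forall>v\<in>M. fadd u v \<in> M) \<and>
     (\<forall>u\<in>M. finv u \<in> M) \<and>
     (\<forall>u\<in>M. fadd u 0 = u) \<and>
     (\<forall>u\<in>M. \<forall>v\<in>M. fadd u v = fadd v u) \<and>
     (\<forall>u\<in>M. \<forall>v\<in>M. \<forall>w\<in>M. fadd (fadd u v) w = fadd u (fadd v w)) \<and>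
     (\<forall>u\<in>M. fadd u (finv u) = 0)"

text \<open>Partitions with at most n parts, indexed from 1 (value at 0 is irrelevant).\<close>
definition partition_le :: "nat \<Rightarrow> (nat \<Rightarrow> nat) \<Rightarrow> bool" where
  "partition_le n lam \<longleftrightarrow>
     (\<forall>i j. 1 \<le> i \<longrightarrow> i \<le> j \<longrightarrow> lam j \<le> lam i) \<and> (\<forall>i. n < i \<longrightarrow> lam i = 0)"

definition conj_part :: "(nat \<Rightarrow> nat) \<Rightarrow> nat \<Rightarrow> nat" where
  "conj_part lam j = card {i. 1 \<le> i \<and> j \<le> lam i}"

definition boxes :: "(nat \<Rightarrow> nat) \<Rightarrow> (nat \<times> nat) set" where
  "boxes lam = {(i, j). 1 \<le> i \<and> 1 \<le> j \<and> j \<le> lam i}"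

definition fact_pow :: "('a \<Rightarrow> 'a \<Rightarrow> 'a::comm_ring_1) \<Rightarrow> 'a \<Rightarrow> (int \<Rightarrow> 'a) \<Rightarrow> nat \<Rightarrow> nat \<Rightarrow> 'a" where
  "fact_pow fadd t b k n = (\<Prod>i = 1..k. fadd t (b (int n + 1 - int i)))"

text \<open>The factorial Schur function s^L_lambda(x_1,...,x_n || b), evaluated at a point
  x :: nat => 'a (only x 1, ..., x n matter), via the symmetrization formula.\<close>
definition sL :: "('a \<Rightarrow> 'a \<Rightarrow> 'a::field) \<Rightarrow> ('a \<Rightarrow> 'a) \<Rightarrow> nat \<Rightarrow> (nat \<Rightarrow> nat)
                   \<Rightarrow> (int \<Rightarrow> 'a) \<Rightarrow> (nat \<Rightarrow> 'a) \<Rightarrow> 'a" where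
  "sL fadd finv n lam b x =
     (\<Sum>w \<in> {w. w permutes {1..n}}.
        (\<Prod>i = 1..n. fact_pow fadd (x (w i)) b (lam i + n - i) n) /
        (\<Prod>i = 1..n. \<Prod>j \<in> {i<..n}. fadd (x (w i)) (finv (x (w j)))))"

definition spec_pt :: "('a \<Rightarrow> 'a) \<Rightarrow> (int \<Rightarrow> 'a) \<Rightarrow> (nat \<Rightarrow> nat) \<Rightarrow> nat \<Rightarrow> 'a" where
  "spec_pt finv b mu i = finv (b (int i - int (mu i)))"

end

theory Submission imports Defs begin

text \<open>At the point x_i = bar b_{i - mu_i}, the numerator of the w-summand contains the factors
  x_{w i} +_F b_q for q in the interval [i - lam_i + 1, n], so the summand vanishes as soon as
  w i - mu_{w i} falls into that interval for some i. Since i - mu_i is strictly increasing, a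
  permutation escaping all these zeros maps {1..i} into {1..<i} whenever mu_i < lam_i, which is
  impossible; for mu = lam it must be the identity. The identity summand is evaluated by Macdonald's
  lemma: [i - lam_i + 1, n] is the disjoint union of {j - lam_j | i < j <= n} and
  {lam'_j - j + 1 | 1 <= j <= lam_i}. The first part cancels against the denominator, the second
  yields row i of the product over boxes.\<close>

abbreviation shifted_part :: "(nat \<Rightarrow> nat) \<Rightarrow> nat \<Rightarrow> int" where
  "shifted_part lam i \<equiv> int i - int (lam i)"

abbreviation shifted_conj :: "(nat \<Rightarrow> nat) \<Rightarrow> nat \<Rightarrow> int" where
  "shifted_conj lam j \<equiv> int (conj_part lam j) - int j + 1"

lemma fgl_on_inv_add_cancel:
  assumes "fgl_on M fadd finv" "u \<in> M"
  shows "fadd (finv u) u = 0"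
  using assms unfolding fgl_on_def by metis

lemma fgl_on_inv_inv:
  assumes fgl: "fgl_on M fadd finv" and u: "u \<in> M"
  shows "finv (finv u) = u"
proof -
  have iM: "finv u \<in> M" and iiM: "finv (finv u) \<in> M" using fgl u unfolding fgl_on_def by auto
  have "u = fadd u (fadd (finv u) (finv (finv u)))" using fgl u iM unfolding fgl_on_def by metis
  also have "\<dots> = fadd (fadd u (finv u)) (finv (finv u))" using fgl u iM iiM unfolding fgl_on_def by metis
  also have "\<dots> = finv (finv u)" using fgl u iiM unfolding fgl_on_def by metis
  finally show ?thesis by simp
qed

lemma shifted_part_strict_mono:
  assumes "partition_le n lam" "1 \<le> i" "i < j"
  shows "shifted_part lam i < shifted_part lam j"
proof -
  have "lam j \<le> lam i" using assms unfolding partition_le_def by auto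
  then show ?thesis using assms(3) by linarith
qed

lemma shifted_part_mono:
  assumes "partition_le n lam" "1 \<le> i" "i \<le> j"
  shows "shifted_part lam i \<le> shifted_part lam j"
  using assms(3) by (cases "i = j") (auto intro!: less_imp_le shifted_part_strict_mono[OF assms(1,2)])

lemma conj_part_set_subset:
  assumes "partition_le n lam" "1 \<le> j"
  shows "{i. 1 \<le> i \<and> j \<le> lam i} \<subseteq> {1..n}"
  using assms unfolding partition_le_def by (auto simp: not_le[symmetric])

lemma conj_part_le:
  assumes "partition_le n lam" "1 \<le> j"
  shows "conj_part lam j \<le> n"
  using card_mono[OF finite_atLeastAtMost conj_part_set_subset[OF assms]]
  unfolding conj_part_def by simp

lemma conj_part_antimono:
  assumes lam: "partition_le n lam" and "1 \<le> j" "j \<le> j'"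
  shows "conj_part lam j' \<le> conj_part lam j"
  unfolding conj_part_def
  by (rule card_mono[OF finite_subset[OF conj_part_set_subset[OF lam assms(2)]]]) (use assms in auto)

lemma le_conj_part_iff:
  assumes lam: "partition_le n lam" and i: "1 \<le> i" and j: "1 \<le> j"
  shows "i \<le> conj_part lam j \<longleftrightarrow> j \<le> lam i"
proof -
  let ?A = "{i. 1 \<le> i \<and> j \<le> lam i}"
  have fin: "finite ?A" using finite_subset[OF conj_part_set_subset[OF lam j]] by simp
  have anti: "lam k \<le> lam k'" if "1 \<le> k'" "k' \<le> k" for k k'
    using lam that unfolding partition_le_def by auto
  show ?thesis
  proof
    assume le: "i \<le> conj_part lam j"
    show "j \<le> lam i"
    proof (rule ccontr)
      assume "\<not> j \<le> lam i"
      have "?A \<subseteq> {1..<i}"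
      proof
        fix k assume "k \<in> ?A"
        then show "k \<in> {1..<i}" using anti[of i k] i \<open>\<not> j \<le> lam i\<close> by (cases "k < i") auto
      qed
      then have "card ?A \<le> i - 1" using card_mono[of "{1..<i}" ?A] by simp
      then show False using le i unfolding conj_part_def by simp
    qed
  next
    assume "j \<le> lam i"
    then have "{1..i} \<subseteq> ?A" using anti[of _ i] by (auto intro: order.trans)
    from card_mono[OF fin this] show "i \<le> conj_part lam j" unfolding conj_part_def by simp
  qed
qed

lemma inj_on_shifted_part:
  assumes "partition_le n lam"
  shows "inj_on (shifted_part lam) {m<..n}"
proof (rule linorder_inj_onI')
  fix i j assume "i \<in> {m<..n}" "i < j"
  then show "shifted_part lam i \<noteq> shifted_part lam j"
    using shifted_part_strict_mono[OF assms, of i j] by simp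
qed

lemma inj_on_shifted_conj:
  assumes "partition_le n lam"
  shows "inj_on (shifted_conj lam) {1..m}"
proof (rule linorder_inj_onI')
  fix j j' assume "j \<in> {1..m}" "j < j'"
  then show "shifted_conj lam j \<noteq> shifted_conj lam j'"
    using conj_part_antimono[OF assms, of j j'] by simp
qed

lemma shifted_part_disjoint_shifted_conj:
  assumes lam: "partition_le n lam" and "1 \<le> i" "1 \<le> j"
  shows "shifted_part lam i \<noteq> shifted_conj lam j"
  using le_conj_part_iff[OF assms] by (cases "j \<le> lam i") simp_all

text \<open>Macdonald, Symmetric Functions, I.(1.7), in the form of a single row.\<close>
lemma interval_eq_shifted_part_Un_shifted_conj:
  assumes lam: "partition_le n lam" and i: "i \<in> {1..n}"
  shows "{shifted_part lam i + 1 .. int n}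
           = shifted_part lam ` {i<..n} \<union> shifted_conj lam ` {1..lam i}"
    (is "?I = ?P \<union> ?C")
proof (rule card_subset_eq[symmetric])
  have "?P \<subseteq> ?I"
  proof
    fix x assume "x \<in> ?P"
    then obtain k where k: "k \<in> {i<..n}" "x = shifted_part lam k" by auto
    then show "x \<in> ?I" using shifted_part_strict_mono[OF lam, of i k] i by auto
  qed
  moreover have "?C \<subseteq> ?I"
  proof
    fix x assume "x \<in> ?C"
    then obtain j where j: "j \<in> {1..lam i}" "x = shifted_conj lam j" by auto
    have "i \<le> conj_part lam j" using le_conj_part_iff[OF lam, of i j] i j by auto
    then show "x \<in> ?I" using conj_part_le[OF lam, of j] j by auto
  qed
  ultimately show "?P \<union> ?C \<subseteq> ?I" by (rule Un_least)
  have "?P \<inter> ?C = {}"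
    using shifted_part_disjoint_shifted_conj[OF lam] i by (auto simp del: One_nat_def)
  then have "card (?P \<union> ?C) = card ?P + card ?C" by (simp add: card_Un_disjoint)
  also have "\<dots> = (n - i) + lam i"
    using card_image[OF inj_on_shifted_part[OF lam, of i]]
      card_image[OF inj_on_shifted_conj[OF lam, of "lam i"]] by simp
  also have "\<dots> = card ?I" using i by simp
  finally show "card (?P \<union> ?C) = card ?I" .
qed (rule finite_atLeastAtMost_int)

lemma boxes_eq_Sigma:
  assumes "partition_le n lam"
  shows "boxes lam = Sigma {1..n} (\<lambda>i. {1..lam i})"
  using assms unfolding boxes_def partition_le_def by (auto simp: not_le[symmetric])

lemma permutes_shifted_dominated_imp_le:
  assumes lam: "partition_le n lam" and mu: "partition_le n mu" and w: "w permutes {1..n}"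
    and dom: "\<forall>i\<in>{1..n}. shifted_part mu (w i) \<le> shifted_part lam i"
    and i: "i \<in> {1..n}"
  shows "lam i \<le> mu i"
proof (rule ccontr)
  assume "\<not> lam i \<le> mu i"
  then have lt: "shifted_part lam i < shifted_part mu i" by simp
  have "w ` {1..i} \<subseteq> {1..<i}"
  proof
    fix y assume "y \<in> w ` {1..i}"
    then obtain j where j: "j \<in> {1..i}" "y = w j" by auto
    have wj: "w j \<in> {1..n}" using permutes_in_image[OF w] j i by auto
    have "shifted_part mu (w j) \<le> shifted_part lam j" using dom j i by auto
    also have "\<dots> \<le> shifted_part lam i" using shifted_part_mono[OF lam, of j i] j by auto
    finally have "w j < i" using lt shifted_part_mono[OF mu, of i "w j"] i by fastforce
    then show "y \<in> {1..<i}" using wj j by auto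
  qed
  moreover have "inj_on w {1..i}" using permutes_inj[OF w] by (auto intro: inj_on_subset)
  ultimately have "card {1..i} \<le> card {1..<i}"
    by (metis card_image card_mono finite_atLeastLessThan)
  then show False using i by (cases i) auto
qed

lemma permutes_shifted_dominated_imp_id:
  assumes lam: "partition_le n lam" and w: "w permutes {1..n}"
    and dom: "\<forall>i\<in>{1..n}. shifted_part lam (w i) \<le> shifted_part lam i"
  shows "w = id"
proof -
  have le: "w i \<le> i" if "i \<in> {1..n}" for i
    using dom that shifted_part_strict_mono[OF lam, of i "w i"] by force
  have "sum w {1..n} = sum id {1..n}"
    using sum.permute[OF w, of id] by (simp add: comp_def)
  then have "w i = i" if "i \<in> {1..n}" for i
    using sum_mono_inv[of w "{1..n}" id i] le that by auto
  then show ?thesis using permutes_not_in[OF w] by fastforce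
qed

definition sL_term :: "('a \<Rightarrow> 'a \<Rightarrow> 'a::field) \<Rightarrow> ('a \<Rightarrow> 'a) \<Rightarrow> nat \<Rightarrow> (nat \<Rightarrow> nat)
                        \<Rightarrow> (int \<Rightarrow> 'a) \<Rightarrow> (nat \<Rightarrow> 'a) \<Rightarrow> (nat \<Rightarrow> nat) \<Rightarrow> 'a" where
  "sL_term fadd finv n lam b x w =
     (\<Prod>i = 1..n. fact_pow fadd (x (w i)) b (lam i + n - i) n) /
     (\<Prod>i = 1..n. \<Prod>j \<in> {i<..n}. fadd (x (w i)) (finv (x (w j))))"

lemma sL_eq_sum_sL_term:
  "sL fadd finv n lam b x = (\<Sum>w \<in> {w. w permutes {1..n}}. sL_term fadd finv n lam b x w)"
  unfolding sL_def sL_term_def ..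

lemma fact_pow_eq_prod_interval:
  "fact_pow fadd t b k n = (\<Prod>q \<in> {int n + 1 - int k .. int n}. fadd t (b q))"
  unfolding fact_pow_def
  by (rule prod.reindex_bij_witness[where i="\<lambda>q. nat (int n + 1 - q)" and j="\<lambda>k. int n + 1 - int k"])
     auto

lemma fact_pow_shifted_eq_prod_interval:
  assumes "i \<le> n"
  shows "fact_pow fadd t b (lam i + n - i) n = (\<Prod>q \<in> {shifted_part lam i + 1 .. int n}. fadd t (b q))"
proof -
  have "int n + 1 - int (lam i + n - i) = shifted_part lam i + 1" using assms by (simp add: of_nat_diff)
  then show ?thesis by (metis fact_pow_eq_prod_interval)
qed

lemma sL_term_spec_pt_eq_0:
  fixes fadd :: "'a \<Rightarrow> 'a \<Rightarrow> 'a::field"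
  assumes cancel: "\<And>q. fadd (finv (b q)) (b q) = 0"
    and w: "w permutes {1..n}" and i: "i \<in> {1..n}"
    and lt: "shifted_part lam i < shifted_part mu (w i)"
  shows "sL_term fadd finv n lam b (spec_pt finv b mu) w = 0"
proof -
  have "w i \<in> {1..n}" using permutes_in_image[OF w] i by simp
  then have q: "shifted_part mu (w i) \<in> {shifted_part lam i + 1 .. int n}" using lt by auto
  have "i \<le> n" using i by simp
  then have "fact_pow fadd (spec_pt finv b mu (w i)) b (lam i + n - i) n
      = (\<Prod>q \<in> {shifted_part lam i + 1 .. int n}. fadd (spec_pt finv b mu (w i)) (b q))"
    by (rule fact_pow_shifted_eq_prod_interval)
  also have "\<dots> = 0"
    by (rule prod_zero[OF _ bexI[OF _ q]]) (simp_all add: spec_pt_def cancel)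
  finally have "fact_pow fadd (spec_pt finv b mu (w i)) b (lam i + n - i) n = 0" .
  then have "(\<Prod>i = 1..n. fact_pow fadd (spec_pt finv b mu (w i)) b (lam i + n - i) n) = 0"
    using i by (intro prod_zero) auto
  then show ?thesis unfolding sL_term_def by simp
qed

lemma sL_term_id_spec_pt_eq_prod_boxes:
  fixes fadd :: "'a \<Rightarrow> 'a \<Rightarrow> 'a::field"
  assumes inv_inv: "\<And>q. finv (finv (b q)) = b q"
    and generic: "\<And>p q. p \<noteq> q \<Longrightarrow> fadd (finv (b p)) (b q) \<noteq> 0"
    and lam: "partition_le n lam"
  shows "sL_term fadd finv n lam b (spec_pt finv b lam) id
       = (\<Prod>(i, j) \<in> boxes lam. fadd (finv (b (shifted_part lam i))) (b (shifted_conj lam j)))"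
proof -
  define F where "F p q = fadd (finv (b p)) (b q)" for p q
  define D where "D i = (\<Prod>j\<in>{i<..n}. F (shifted_part lam i) (shifted_part lam j))" for i
  define R where "R i = (\<Prod>j\<in>{1..lam i}. F (shifted_part lam i) (shifted_conj lam j))" for i
  have num: "fact_pow fadd (spec_pt finv b lam i) b (lam i + n - i) n = D i * R i"
    if i: "i \<in> {1..n}" for i
  proof -
    have "i \<le> n" using i by simp
    then have "fact_pow fadd (spec_pt finv b lam i) b (lam i + n - i) n
        = (\<Prod>q \<in> {shifted_part lam i + 1 .. int n}. F (shifted_part lam i) q)"
      unfolding F_def spec_pt_def by (rule fact_pow_shifted_eq_prod_interval)
    also have "\<dots> = (\<Prod>q \<in> shifted_part lam ` {i<..n}. F (shifted_part lam i) q)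
                   * (\<Prod>q \<in> shifted_conj lam ` {1..lam i}. F (shifted_part lam i) q)"
      unfolding interval_eq_shifted_part_Un_shifted_conj[OF lam i]
      by (rule prod.union_disjoint)
         (use shifted_part_disjoint_shifted_conj[OF lam] i in \<open>auto simp del: One_nat_def\<close>)
    also have "\<dots> = D i * R i"
      unfolding D_def R_def
      by (simp only: prod.reindex[OF inj_on_shifted_part[OF lam]] prod.reindex[OF inj_on_shifted_conj[OF lam]]
          comp_def)
    finally show ?thesis .
  qed
  have den: "(\<Prod>j\<in>{i<..n}. fadd (spec_pt finv b lam i) (finv (spec_pt finv b lam j))) = D i" for i
    unfolding D_def F_def spec_pt_def using inv_inv by simp
  have "D i \<noteq> 0" if "i \<in> {1..n}" for i
    using that generic shifted_part_strict_mono[OF lam, of i] by (force simp: D_def F_def)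
  then have "sL_term fadd finv n lam b (spec_pt finv b lam) id = (\<Prod>i=1..n. R i)"
    by (simp add: sL_term_def num den prod.distrib prod_zero_iff)
  also have "\<dots> = (\<Prod>(i, j) \<in> boxes lam. F (shifted_part lam i) (shifted_conj lam j))"
    unfolding boxes_eq_Sigma[OF lam] R_def by (subst prod.Sigma) auto
  finally show ?thesis unfolding F_def .
qed

lemma sL_spec_pt_eq_0_if_not_contained:
  fixes fadd :: "'a \<Rightarrow> 'a \<Rightarrow> 'a::field"
  assumes cancel: "\<And>q. fadd (finv (b q)) (b q) = 0"
    and lam: "partition_le n lam" and mu: "partition_le n mu"
    and i: "i \<in> {1..n}" "mu i < lam i"
  shows "sL fadd finv n lam b (spec_pt finv b mu) = 0"
  unfolding sL_eq_sum_sL_term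
proof (rule sum.neutral, safe)
  fix w assume w: "w permutes {1..n}"
  then have "\<not> (\<forall>i\<in>{1..n}. shifted_part mu (w i) \<le> shifted_part lam i)"
    using permutes_shifted_dominated_imp_le[OF lam mu w] i by fastforce
  then show "sL_term fadd finv n lam b (spec_pt finv b mu) w = 0"
    using sL_term_spec_pt_eq_0[where fadd = fadd and finv = finv and b = b, OF cancel w]
    by (auto simp: not_le)
qed

lemma sL_spec_pt_self_eq_sL_term_id:
  fixes fadd :: "'a \<Rightarrow> 'a \<Rightarrow> 'a::field"
  assumes cancel: "\<And>q. fadd (finv (b q)) (b q) = 0" and lam: "partition_le n lam"
  shows "sL fadd finv n lam b (spec_pt finv b lam) = sL_term fadd finv n lam b (spec_pt finv b lam) id"
proof -
  have "sL_term fadd finv n lam b (spec_pt finv b lam) w = 0" if w: "w permutes {1..n}" "w \<noteq> id" for w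
  proof -
    have "\<not> (\<forall>i\<in>{1..n}. shifted_part lam (w i) \<le> shifted_part lam i)"
      using permutes_shifted_dominated_imp_id[OF lam] w by blast
    then show ?thesis
      using sL_term_spec_pt_eq_0[where fadd = fadd and finv = finv and b = b, OF cancel w(1)]
      by (auto simp: not_le)
  qed
  then show ?thesis
    unfolding sL_eq_sum_sL_term
    by (subst sum.remove[of _ id]) (auto intro: sum.neutral permutes_id finite_permutations)
qed

theorem mainTheorem12:
  fixes M :: "'a::field set" and fadd :: "'a \<Rightarrow> 'a \<Rightarrow> 'a" and finv :: "'a \<Rightarrow> 'a"
    and b :: "int \<Rightarrow> 'a" and n :: nat and lam mu :: "nat \<Rightarrow> nat"
  assumes fgl: "fgl_on M fadd finv"
    and bM: "\<And>p. b p \<in> M"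
    and generic: "\<And>p q. p \<noteq> q \<Longrightarrow> fadd (finv (b p)) (b q) \<noteq> 0"
    and n: "1 \<le> n"
    and lam: "partition_le n lam" and mu: "partition_le n mu"
  shows "((\<exists>i\<in>{1..n}. mu i < lam i) \<longrightarrow> sL fadd finv n lam b (spec_pt finv b mu) = 0)
       \<and> sL fadd finv n lam b (spec_pt finv b lam) =
           (\<Prod>(i, j) \<in> boxes lam.
              fadd (finv (b (int i - int (lam i)))) (b (int (conj_part lam j) - int j + 1)))"
proof -
  have cancel: "\<And>q. fadd (finv (b q)) (b q) = 0" using fgl_on_inv_add_cancel[OF fgl bM] .
  have inv_inv: "\<And>q. finv (finv (b q)) = b q" using fgl_on_inv_inv[OF fgl bM] .
  show ?thesis
    using sL_spec_pt_eq_0_if_not_contained[where fadd = fadd and finv = finv and b = b, OF cancel lam mu]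
      sL_spec_pt_self_eq_sL_term_id[where fadd = fadd and finv = finv and b = b, OF cancel lam]
      sL_term_id_spec_pt_eq_prod_boxes[where fadd = fadd and finv = finv and b = b, OF inv_inv generic lam]
    by auto
qed

end
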